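(* Let $S$ be a set and let $P$ be a set of $S$-probabilities such that $0,1\in P$ and $1-p\in P$ for every $p\in P$. Then all elements of $P$ are varying if and only if $P$ is complemented, i.e. $p\wedge p'=0$ for all $p\in P$.
   Context: An $S$-probability is a function $p\colon S\to[0,1]$; sets of $S$-probabilities are ordered pointwise, $0,1$ are the constant functions and $p':=1-p$. For $p,q\in P$, $p\wedge q=0$ means that the only $x\in P$ with $x\le p$ and $x\le q$ is $x=0$. An $S$-probability $p$ is varying if whenever $p\le 1/2$ pointwise or $p\ge 1/2$ pointwise, then $p=0$ or $p=1$. *)

theory Defs
  imports Complex_Main
begin

text \<open>We represent it as a real-valued
  function on the ambient type that is 0 outside S (so functions are determined by
  their values on S, and the pointwise order of functions is the order on S).\<close>

definition sprob :: "'a set \<Rightarrow> ('a \<Rightarrow> real) \<Rightarrow> bool" where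
  "sprob S p \<longleftrightarrow> (\<forall>x\<in>S. 0 \<le> p x \<and> p x \<le> 1) \<and> (\<forall>x. x \<notin> S \<longrightarrow> p x = 0)"

definition pzero :: "'a set \<Rightarrow> 'a \<Rightarrow> real" where
  "pzero S = (\<lambda>x. 0)"

definition pone :: "'a set \<Rightarrow> 'a \<Rightarrow> real" where
  "pone S = (\<lambda>x. if x \<in> S then 1 else 0)"

definition pcompl :: "'a set \<Rightarrow> ('a \<Rightarrow> real) \<Rightarrow> 'a \<Rightarrow> real" where
  "pcompl S p = (\<lambda>x. if x \<in> S then 1 - p x else 0)"

definition pleq :: "'a set \<Rightarrow> ('a \<Rightarrow> real) \<Rightarrow> ('a \<Rightarrow> real) \<Rightarrow> bool" where
  "pleq S p q \<longleftrightarrow> (\<forall>x\<in>S. p x \<le> q x)"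

definition meet_zero :: "'a set \<Rightarrow> ('a \<Rightarrow> real) set \<Rightarrow> ('a \<Rightarrow> real) \<Rightarrow> ('a \<Rightarrow> real) \<Rightarrow> bool" where
  "meet_zero S P p q \<longleftrightarrow> (\<forall>x\<in>P. pleq S x p \<and> pleq S x q \<longrightarrow> x = pzero S)"

definition varying :: "'a set \<Rightarrow> ('a \<Rightarrow> real) \<Rightarrow> bool" where
  "varying S p \<longleftrightarrow>
     (((\<forall>x\<in>S. p x \<le> 1/2) \<or> (\<forall>x\<in>S. p x \<ge> 1/2)) \<longrightarrow> p = pzero S \<or> p = pone S)"

definition complemented :: "'a set \<Rightarrow> ('a \<Rightarrow> real) set \<Rightarrow> bool" where
  "complemented S P \<longleftrightarrow> (\<forall>p\<in>P. meet_zero S P p (pcompl S p))"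

end

theory Submission
  imports Defs
begin

text \<open>A common lower bound x of p and p' satisfies x \<le> 1/2, so if x is varying it is 0
  (it cannot be 1 unless S is empty, where 1 = 0). Conversely, if p \<le> 1/2 then p itself is
  a common lower bound of p and p'; if p \<ge> 1/2 then p' is, and p' = 0 forces p = p'' = 1.\<close>

lemma pleq_refl: "pleq S p p"
  by (simp add: pleq_def)

lemma pcompl_pcompl:
  assumes "sprob S p"
  shows "pcompl S (pcompl S p) = p"
  using assms by (auto simp: pcompl_def sprob_def)

lemma pcompl_pzero: "pcompl S (pzero S) = pone S"
  by (auto simp: pcompl_def pzero_def pone_def)

lemma le_half_if_pleq_both:
  assumes "pleq S x p" and "pleq S x (pcompl S p)" and "s \<in> S"
  shows "x s \<le> 1/2"
proof -
  have "x s \<le> p s" and "x s \<le> 1 - p s"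
    using assms by (simp_all add: pleq_def pcompl_def)
  then show ?thesis by linarith
qed

lemma pleq_pcompl_if_le_half:
  assumes "\<forall>s\<in>S. p s \<le> 1/2"
  shows "pleq S p (pcompl S p)"
  using assms by (auto simp: pleq_def pcompl_def)

lemma pcompl_le_half_if_ge_half:
  assumes "\<forall>s\<in>S. p s \<ge> 1/2"
  shows "\<forall>s\<in>S. pcompl S p s \<le> 1/2"
  using assms by (simp add: pcompl_def)

lemma varying_le_half_imp_pzero:
  assumes "varying S x" and "\<forall>s\<in>S. x s \<le> 1/2"
  shows "x = pzero S"
proof -
  have "x = pzero S \<or> x = pone S"
    using assms unfolding varying_def by blast
  moreover have "pone S = pzero S" if "x = pone S"
    using that assms(2) by (auto simp: pone_def pzero_def)
  ultimately show ?thesis by blast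
qed

lemma meet_zero_le_half_imp_pzero:
  assumes "meet_zero S P p (pcompl S p)" and "p \<in> P" and "\<forall>s\<in>S. p s \<le> 1/2"
  shows "p = pzero S"
  using assms(1,2) pleq_refl pleq_pcompl_if_le_half[OF assms(3)] unfolding meet_zero_def by blast

lemma complemented_if_all_varying:
  assumes "\<forall>p\<in>P. varying S p"
  shows "complemented S P"
  unfolding complemented_def meet_zero_def
proof (intro ballI impI)
  fix p x
  assume "x \<in> P" and "pleq S x p \<and> pleq S x (pcompl S p)"
  then have "varying S x" and "\<forall>s\<in>S. x s \<le> 1/2"
    using assms le_half_if_pleq_both[of S x p] by auto
  then show "x = pzero S"
    by (rule varying_le_half_imp_pzero)
qed

lemma varying_if_complemented:
  assumes sprobs: "\<forall>p\<in>P. sprob S p" and compl_closed: "\<forall>p\<in>P. pcompl S p \<in> P"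
    and "complemented S P" and "p \<in> P"
  shows "varying S p"
  unfolding varying_def
proof
  have meet_zero: "meet_zero S P q (pcompl S q)" if "q \<in> P" for q
    using \<open>complemented S P\<close> that unfolding complemented_def by blast
  assume "(\<forall>s\<in>S. p s \<le> 1/2) \<or> (\<forall>s\<in>S. p s \<ge> 1/2)"
  then show "p = pzero S \<or> p = pone S"
  proof
    assume "\<forall>s\<in>S. p s \<le> 1/2"
    then have "p = pzero S"
      using meet_zero_le_half_imp_pzero[OF meet_zero] \<open>p \<in> P\<close> by blast
    then show ?thesis ..
  next
    assume "\<forall>s\<in>S. p s \<ge> 1/2"
    moreover have "pcompl S p \<in> P"
      using compl_closed \<open>p \<in> P\<close> by blast
    ultimately have "pcompl S p = pzero S"
      using meet_zero_le_half_imp_pzero[OF meet_zero, of "pcompl S p"] pcompl_le_half_if_ge_half[of S p]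
      by blast
    then have "p = pone S"
      using pcompl_pcompl[of S p] sprobs \<open>p \<in> P\<close> by (simp add: pcompl_pzero)
    then show ?thesis ..
  qed
qed

theorem mainTheorem2:
  fixes S :: "'a set" and P :: "('a \<Rightarrow> real) set"
  assumes "\<forall>p\<in>P. sprob S p"
    and "pzero S \<in> P" and "pone S \<in> P"
    and "\<forall>p\<in>P. pcompl S p \<in> P"
  shows "(\<forall>p\<in>P. varying S p) \<longleftrightarrow> complemented S P"
  using complemented_if_all_varying[of P S] varying_if_complemented[OF assms(1,4)] by blast

end
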